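(* Let $a\geq 1$ and $b\geq 2$ be integers. For Lebesgue-almost every $x\in cA$ there exists $k\geq 0$ such that $T_{a,b}^k(x)\in\Theta$.
   Context: For $n\geq 1$ let $\Lambda^n=\{x\in\mathbb{R}^n : 0\leq x_1\leq\cdots\leq x_n\}$. For integers $a,b\geq 1$ the map $T_{a,b}:\Lambda^{a+b}\to\Lambda^{a+b}$ sends $x$ to the vector obtained by arranging $x_1,\ldots,x_a,\,x_{a+1}-x_a,\ldots,x_{a+b}-x_a$ in nondecreasing order. Let $\sigma(x)=x_1+\cdots+x_{a+b}$, $cA=\{x\in\Lambda^{a+b}: \sigma(x)>b\,x_{a+b}\}$ and $\Theta=\{x\in cA : 2x_a\geq x_{a+b}\}$. *)

theory Defs
  imports "HOL-Analysis.Analysis"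
begin

text \<open>Vectors of R^n are represented as functions nat => real, extensional on
  {..<n}; coordinate x_i of the paper (1-indexed) is x (i-1) here.\<close>

definition Lam :: "nat \<Rightarrow> (nat \<Rightarrow> real) set" where
  "Lam n = {x \<in> extensional {..<n}. (0 < n \<longrightarrow> 0 \<le> x 0) \<and>
                  (\<forall>i. Suc i < n \<longrightarrow> x i \<le> x (Suc i))}"

definition Tab :: "nat \<Rightarrow> nat \<Rightarrow> (nat \<Rightarrow> real) \<Rightarrow> (nat \<Rightarrow> real)" where
  "Tab a b x = (let L = sort (map x [0..<a] @ map (\<lambda>i. x i - x (a - 1)) [a..<a+b])
                in restrict (\<lambda>i. L ! i) {..<a+b})"

definition sig :: "nat \<Rightarrow> (nat \<Rightarrow> real) \<Rightarrow> real" where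
  "sig n x = (\<Sum>i<n. x i)"

definition cA :: "nat \<Rightarrow> nat \<Rightarrow> (nat \<Rightarrow> real) set" where
  "cA a b = {x \<in> Lam (a+b). sig (a+b) x > real b * x (a+b-1)}"

definition Theta :: "nat \<Rightarrow> nat \<Rightarrow> (nat \<Rightarrow> real) set" where
  "Theta a b = {x \<in> cA a b. 2 * x (a-1) \<ge> x (a+b-1)}"

end

theory Submission
  imports Defs
begin

text \<open>The proof shows more: the conclusion holds for every point of cA, not only almost every one.
  Put e(x) = \<sigma>(x) - b x_{a+b}, so cA = {e > 0}. Outside \<Theta> we have x_a < x_{a+b} - x_a, so the
  largest coordinate of T(x) is at most x_{a+b} - x_a; hence e does not decrease along T, while
  \<sigma>(T x) = \<sigma>(x) - b x_a and e(x) \<le> a x_a. An orbit that stays outside \<Theta> would therefore lose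
  at least b e(x)/a of its nonnegative coordinate sum at every step.\<close>

lemma Lam_mono:
  assumes "x \<in> Lam n" "i \<le> j" "j < n"
  shows "x i \<le> x j"
  using assms(2,3)
proof (induction j)
  case (Suc j)
  show ?case
  proof (cases "i = Suc j")
    case False
    then have "x i \<le> x j" using Suc by simp
    also have "x j \<le> x (Suc j)" using assms(1) Suc.prems by (simp add: Lam_def)
    finally show ?thesis .
  qed simp
qed simp

lemma Lam_nonneg:
  assumes "x \<in> Lam n" "i < n"
  shows "0 \<le> x i"
proof -
  have "0 \<le> x 0" using assms by (simp add: Lam_def)
  also have "x 0 \<le> x i" using Lam_mono[OF assms(1), of 0 i] assms by simp
  finally show ?thesis .
qed

lemma sig_nonneg: "x \<in> Lam n \<Longrightarrow> 0 \<le> sig n x"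
  unfolding sig_def by (rule sum_nonneg) (auto intro: Lam_nonneg)

lemma sig_add: "sig (a+b) x = (\<Sum>i<a. x i) + (\<Sum>i\<in>{a..<a+b}. x i)"
  unfolding sig_def by (metis atLeast0LessThan sum.atLeastLessThan_concat le_add1 zero_le)

definition Tab_list :: "nat \<Rightarrow> nat \<Rightarrow> (nat \<Rightarrow> real) \<Rightarrow> real list" where
  "Tab_list a b x = sort (map x [0..<a] @ map (\<lambda>i. x i - x (a - 1)) [a..<a+b])"

lemma length_Tab_list: "length (Tab_list a b x) = a + b"
  by (simp add: Tab_list_def)

lemma sorted_Tab_list: "sorted (Tab_list a b x)"
  by (simp add: Tab_list_def)

lemma set_Tab_list:
  "set (Tab_list a b x) = x ` {0..<a} \<union> (\<lambda>i. x i - x (a - 1)) ` {a..<a+b}"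
  by (simp add: Tab_list_def)

lemma Tab_eq_nth: "i < a + b \<Longrightarrow> Tab a b x i = Tab_list a b x ! i"
  by (simp add: Tab_def Tab_list_def)

lemma Tab_in_Lam:
  assumes "a \<ge> 1" "x \<in> Lam (a+b)"
  shows "Tab a b x \<in> Lam (a+b)"
proof -
  let ?L = "Tab_list a b x"
  have "Tab a b x \<in> extensional {..<a+b}"
    by (simp add: Tab_def Let_def)
  moreover have "Tab a b x i \<le> Tab a b x (Suc i)" if "Suc i < a + b" for i
    using that sorted_nth_mono[OF sorted_Tab_list, of i "Suc i"]
    by (simp add: Tab_eq_nth length_Tab_list)
  moreover have "?L ! 0 \<in> set ?L"
    using assms(1) by (simp add: nth_mem length_Tab_list)
  then have "0 \<le> ?L ! 0"
    unfolding set_Tab_list using Lam_nonneg[OF assms(2)] Lam_mono[OF assms(2)] assms(1)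
    by force
  ultimately show ?thesis
    using assms(1) by (simp add: Lam_def Tab_eq_nth)
qed

lemma sig_Tab: "sig (a+b) (Tab a b x) = sig (a+b) x - real b * x (a - 1)"
proof -
  let ?L = "Tab_list a b x"
  have "sig (a+b) (Tab a b x) = (\<Sum>i<a+b. ?L ! i)"
    unfolding sig_def by (rule sum.cong) (auto simp: Tab_eq_nth)
  also have "\<dots> = sum_list ?L"
    by (simp add: sum_list_sum_nth atLeast0LessThan length_Tab_list)
  also have "\<dots> = sum_list (map x [0..<a]) + sum_list (map (\<lambda>i. x i - x (a - 1)) [a..<a+b])"
    unfolding Tab_list_def by (metis mset_sort sum_list_append sum_mset_sum_list)
  also have "\<dots> = (\<Sum>i<a. x i) + (\<Sum>i\<in>{a..<a+b}. x i) - real b * x (a - 1)"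
    by (simp add: sum_list_distinct_conv_sum_set atLeast0LessThan sum_subtractf)
  finally show ?thesis by (simp add: sig_add)
qed

lemma Tab_le_top_minus:
  assumes "a \<ge> 1" "x \<in> Lam (a+b)" "x (a - 1) \<le> x (a+b-1) - x (a - 1)" "i < a + b"
  shows "Tab a b x i \<le> x (a+b-1) - x (a - 1)"
proof -
  let ?L = "Tab_list a b x"
  have "?L ! i \<in> set ?L" using assms(4) by (simp add: nth_mem length_Tab_list)
  then obtain j where "j < a \<and> ?L ! i = x j \<or> a \<le> j \<and> j < a + b \<and> ?L ! i = x j - x (a - 1)"
    unfolding set_Tab_list by fastforce
  then have "?L ! i \<le> x (a+b-1) - x (a - 1)"
  proof
    assume j: "j < a \<and> ?L ! i = x j"
    then have "x j \<le> x (a - 1)" using assms(1) by (intro Lam_mono[OF assms(2)]) auto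
    then show ?thesis using j assms(3) by linarith
  next
    assume j: "a \<le> j \<and> j < a + b \<and> ?L ! i = x j - x (a - 1)"
    then have "x j \<le> x (a+b-1)" by (intro Lam_mono[OF assms(2)]) auto
    then show ?thesis using j by linarith
  qed
  then show ?thesis using assms(4) by (simp add: Tab_eq_nth)
qed

definition excess :: "nat \<Rightarrow> nat \<Rightarrow> (nat \<Rightarrow> real) \<Rightarrow> real" where
  "excess a b x = sig (a+b) x - real b * x (a+b-1)"

lemma cA_iff_excess: "x \<in> cA a b \<longleftrightarrow> x \<in> Lam (a+b) \<and> excess a b x > 0"
  by (simp add: cA_def excess_def)

lemma excess_le:
  assumes "a \<ge> 1" "x \<in> Lam (a+b)"
  shows "excess a b x \<le> real a * x (a - 1)"
proof -
  have "(\<Sum>i<a. x i) \<le> (\<Sum>i<a. x (a - 1))"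
    by (rule sum_mono) (use Lam_mono[OF assms(2)] assms(1) in auto)
  moreover have "(\<Sum>i\<in>{a..<a+b}. x i) \<le> (\<Sum>i\<in>{a..<a+b}. x (a+b-1))"
    by (rule sum_mono) (use Lam_mono[OF assms(2)] in auto)
  ultimately show ?thesis by (simp add: excess_def sig_add)
qed

lemma excess_Tab_ge:
  assumes "a \<ge> 1" "x \<in> Lam (a+b)" "2 * x (a - 1) < x (a+b-1)"
  shows "excess a b x \<le> excess a b (Tab a b x)"
proof -
  have "Tab a b x (a+b-1) \<le> x (a+b-1) - x (a - 1)"
    using Tab_le_top_minus[OF assms(1,2), of "a+b-1"] assms by simp
  then have "real b * Tab a b x (a+b-1) \<le> real b * (x (a+b-1) - x (a - 1))"
    by (intro mult_left_mono) auto
  then show ?thesis by (simp add: excess_def sig_Tab algebra_simps)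
qed

lemma Tab_step_outside_Theta:
  assumes "a \<ge> 1" "y \<in> cA a b" "y \<notin> Theta a b" "c \<le> excess a b y"
  shows "Tab a b y \<in> cA a b" "c \<le> excess a b (Tab a b y)"
    and "sig (a+b) (Tab a b y) \<le> sig (a+b) y - real b * c / real a"
proof -
  have yL: "y \<in> Lam (a+b)" and "2 * y (a - 1) < y (a+b-1)"
    using assms(2,3) by (auto simp: Theta_def cA_def)
  then have grow: "excess a b y \<le> excess a b (Tab a b y)"
    using excess_Tab_ge[OF assms(1)] by blast
  then show "c \<le> excess a b (Tab a b y)" using assms(4) by simp
  show "Tab a b y \<in> cA a b"
    using grow assms(2) Tab_in_Lam[OF assms(1) yL] by (simp add: cA_iff_excess)
  have "c / real a \<le> y (a - 1)"
    using excess_le[OF assms(1) yL] assms(1,4) by (simp add: field_simps)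
  then have "real b * c / real a \<le> real b * y (a - 1)"
    using mult_left_mono[of "c / real a" "y (a - 1)" "real b"] by simp
  then show "sig (a+b) (Tab a b y) \<le> sig (a+b) y - real b * c / real a"
    by (simp add: sig_Tab)
qed

lemma orbit_outside_Theta:
  assumes "a \<ge> 1" "x \<in> cA a b" "\<forall>j<k. (Tab a b ^^ j) x \<notin> Theta a b"
  shows "(Tab a b ^^ k) x \<in> cA a b"
    and "sig (a+b) ((Tab a b ^^ k) x) \<le> sig (a+b) x - real k * (real b * excess a b x / real a)"
proof -
  have "(Tab a b ^^ k) x \<in> cA a b \<and> excess a b x \<le> excess a b ((Tab a b ^^ k) x) \<and>
    sig (a+b) ((Tab a b ^^ k) x) \<le> sig (a+b) x - real k * (real b * excess a b x / real a)"
    using assms(3)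
  proof (induction k)
    case (Suc k)
    then have "(Tab a b ^^ k) x \<in> cA a b" "excess a b x \<le> excess a b ((Tab a b ^^ k) x)"
      "sig (a+b) ((Tab a b ^^ k) x) \<le> sig (a+b) x - real k * (real b * excess a b x / real a)"
      "(Tab a b ^^ k) x \<notin> Theta a b"
      by auto
    with Tab_step_outside_Theta[OF assms(1) this(1,4,2)] show ?case
      by (simp add: algebra_simps add_divide_distrib)
  qed (use assms(2) in simp)
  then show "(Tab a b ^^ k) x \<in> cA a b"
    and "sig (a+b) ((Tab a b ^^ k) x) \<le> sig (a+b) x - real k * (real b * excess a b x / real a)"
    by blast+
qed

lemma orbit_reaches_Theta:
  assumes "a \<ge> 1" "b \<ge> 1" "x \<in> cA a b"
  shows "\<exists>k. (Tab a b ^^ k) x \<in> Theta a b"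
proof (rule ccontr)
  assume avoid: "\<nexists>k. (Tab a b ^^ k) x \<in> Theta a b"
  define \<delta> where "\<delta> = real b * excess a b x / real a"
  have "\<delta> > 0" using assms by (simp add: \<delta>_def cA_iff_excess)
  then obtain k :: nat where "sig (a+b) x < real k * \<delta>"
    using reals_Archimedean2[of "sig (a+b) x / \<delta>"] by (auto simp: field_simps)
  moreover have "0 \<le> sig (a+b) ((Tab a b ^^ k) x)"
    using orbit_outside_Theta(1)[OF assms(1,3)] avoid by (intro sig_nonneg) (auto simp: cA_def)
  ultimately show False
    using orbit_outside_Theta(2)[OF assms(1,3), of k] avoid by (simp add: \<delta>_def)
qed

theorem lemma5p2:
  fixes a b :: nat
  assumes "a \<ge> 1" and "b \<ge> 2"
  shows "AE x in PiM {..<a+b} (\<lambda>_. lborel).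
           x \<in> cA a b \<longrightarrow> (\<exists>k. (Tab a b ^^ k) x \<in> Theta a b)"
  using orbit_reaches_Theta[OF assms(1)] assms(2) by (intro AE_I2) simp

end
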